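(* Let $(\vdash,\overline{\cdot},\widehat{\cdot})$ be a setting satisfying Pre-Relevance, let $\mathcal{S}_1,\mathcal{S}_2\subseteq\mathcal{L}$ with $\mathcal{S}_1\mid\mathcal{S}_2$, and let $a,b\in\mathit{Arg}_{\vdash}(\mathcal{S}_1\cup\mathcal{S}_2)$ with $\mathsf{Supp}(b)=\Theta$ such that $b$ attacks $a$. Then: (1) some $b'\in\mathit{Arg}_{\vdash}(\mathcal{S}_1\cap\Theta)\cup\mathit{Arg}_{\vdash}(\mathcal{S}_2\cap\Theta)$ attacks $a$; (2) if $a\in\mathit{Arg}_{\vdash}(\mathcal{S}_1)$, some $b'\in\mathit{Arg}_{\vdash}(\mathcal{S}_1\cap\Theta)$ attacks $a$.
   Context: $\mathcal{L}$ is the set of formulas of a language built from propositional atoms; $\mathsf{Atoms}(\mathcal{S})$ is the set of atoms occurring in $\mathcal{S}$, and $\mathcal{S}_1\mid\mathcal{S}_2$ means $\mathsf{Atoms}(\mathcal{S}_1)\cap\mathsf{Atoms}(\mathcal{S}_2)=\emptyset$. A setting is $(\vdash,\overline{\cdot},\widehat{\cdot})$ with ${\vdash}\subseteq\wp_{\sf fin}(\mathcal{L})\times\mathcal{L}$ arbitrary, $\overline{\cdot}:\mathcal{L}\to\wp(\mathcal{L})$, $\widehat{\cdot}$ assigning to each nonempty finite set a finite set of formulas, with $\widehat{\emptyset}=\emptyset$. $\mathit{Arg}_{\vdash}(\mathcal{S})=\{(\Gamma,\gamma):\Gamma\subseteq\mathcal{S}\text{ finite},\Gamma\vdash\gamma\}$,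 $\mathsf{Supp}((\Gamma,\gamma))=\Gamma$; $(\Gamma,\gamma)$ attacks $(\Gamma',\gamma')$ iff $\gamma\in\overline{\phi}$ for some $\phi\in\widehat{\Gamma'}$. Pre-Relevance of the setting: (a) for all $\mathcal{S}_1,\mathcal{S}_2,\phi$ with $\mathcal{S}_1\cup\{\phi\}\mid\mathcal{S}_2$, $\mathcal{S}_1\cup\mathcal{S}_2\vdash\phi$ implies $\mathcal{S}_1'\vdash\phi$ for some $\mathcal{S}_1'\subseteq\mathcal{S}_1$; (b) primeness: for all sets of atoms $\mathcal{A}_1\mid\mathcal{A}_2$, all finite $\mathcal{S}_1,\mathcal{T}_1,\mathcal{S}_2,\mathcal{T}_2$ with $\mathsf{Atoms}(\mathcal{S}_i),\mathsf{Atoms}(\mathcal{T}_i)\subseteq\mathcal{A}_i$, and all $\phi,\psi$ with $\psi\in\overline{\phi}$, $\phi\in\widehat{\mathcal{T}_1\cup\mathcal{T}_2}$: if $\mathcal{S}_1\cup\mathcal{S}_2\vdash\psi$ then there are $i\in\{1,2\}$, $\mathcal{S}_i'\subseteq\mathcal{S}_i$, $\phi_i\in\widehat{\mathcal{T}_i}$, $\psi_i\in\overline{\phi_i}$ with $\mathcal{S}_i'\vdash\psi_i$; (c) $\widehat{\Delta}\subseteq\widehat{\Delta\cup\Delta'}$ for all finite $\Delta,\Delta'$. *)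

theory Defs
  imports Main
begin

definition Atoms :: "('f \<Rightarrow> 'a set) \<Rightarrow> 'f set \<Rightarrow> 'a set" where
  "Atoms atoms S = (\<Union>x\<in>S. atoms x)"

definition indep :: "('f \<Rightarrow> 'a set) \<Rightarrow> 'f set \<Rightarrow> 'f set \<Rightarrow> bool" where
  "indep atoms S1 S2 \<longleftrightarrow> Atoms atoms S1 \<inter> Atoms atoms S2 = {}"

definition setting :: "('f set \<Rightarrow> 'f \<Rightarrow> bool) \<Rightarrow> ('f \<Rightarrow> 'f set) \<Rightarrow> ('f set \<Rightarrow> 'f set) \<Rightarrow> bool" where
  "setting vdash bar hat \<longleftrightarrow>
     (\<forall>\<Gamma> \<gamma>. vdash \<Gamma> \<gamma> \<longrightarrow> finite \<Gamma>) \<and>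
     (\<forall>\<Delta>. finite \<Delta> \<longrightarrow> finite (hat \<Delta>)) \<and>
     hat {} = {}"

definition Arg :: "('f set \<Rightarrow> 'f \<Rightarrow> bool) \<Rightarrow> 'f set \<Rightarrow> ('f set \<times> 'f) set" where
  "Arg vdash S = {(\<Gamma>, \<gamma>). \<Gamma> \<subseteq> S \<and> finite \<Gamma> \<and> vdash \<Gamma> \<gamma>}"

definition Supp :: "'f set \<times> 'f \<Rightarrow> 'f set" where
  "Supp a = fst a"

definition attacks :: "('f \<Rightarrow> 'f set) \<Rightarrow> ('f set \<Rightarrow> 'f set) \<Rightarrow> 'f set \<times> 'f \<Rightarrow> 'f set \<times> 'f \<Rightarrow> bool" where
  "attacks bar hat b a \<longleftrightarrow> (\<exists>\<phi>\<in>hat (fst a). snd b \<in> bar \<phi>)"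

definition pre_relevance ::
  "('f \<Rightarrow> 'a set) \<Rightarrow> ('f set \<Rightarrow> 'f \<Rightarrow> bool) \<Rightarrow> ('f \<Rightarrow> 'f set) \<Rightarrow> ('f set \<Rightarrow> 'f set) \<Rightarrow> bool" where
  "pre_relevance atoms vdash bar hat \<longleftrightarrow>
     (\<forall>S1 S2 \<phi>. indep atoms (S1 \<union> {\<phi>}) S2 \<longrightarrow> vdash (S1 \<union> S2) \<phi> \<longrightarrow>
        (\<exists>S1'\<subseteq>S1. vdash S1' \<phi>)) \<and>
     (\<forall>A1 A2 S1 T1 S2 T2 \<phi> \<psi>. A1 \<inter> A2 = {} \<longrightarrow>
        finite S1 \<longrightarrow> finite T1 \<longrightarrow> finite S2 \<longrightarrow> finite T2 \<longrightarrow>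
        Atoms atoms S1 \<subseteq> A1 \<longrightarrow> Atoms atoms T1 \<subseteq> A1 \<longrightarrow>
        Atoms atoms S2 \<subseteq> A2 \<longrightarrow> Atoms atoms T2 \<subseteq> A2 \<longrightarrow>
        \<psi> \<in> bar \<phi> \<longrightarrow> \<phi> \<in> hat (T1 \<union> T2) \<longrightarrow> vdash (S1 \<union> S2) \<psi> \<longrightarrow>
        (\<exists>S1'\<subseteq>S1. \<exists>\<phi>1\<in>hat T1. \<exists>\<psi>1\<in>bar \<phi>1. vdash S1' \<psi>1) \<or>
        (\<exists>S2'\<subseteq>S2. \<exists>\<phi>2\<in>hat T2. \<exists>\<psi>2\<in>bar \<phi>2. vdash S2' \<psi>2)) \<and>
     (\<forall>\<Delta> \<Delta>'. finite \<Delta> \<longrightarrow> finite \<Delta>' \<longrightarrow> hat \<Delta> \<subseteq> hat (\<Delta> \<union> \<Delta>'))"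

end

theory Submission
  imports Defs
begin

text \<open>Split the attacker's support along the two atom-disjoint parts and the attacked support
  likewise. Primeness then yields a sub-argument of one half of the attacker that already attacks
  the corresponding half of the attacked support, and monotonicity of hat lifts that attack back
  to the whole attacked argument. If the attacked argument lives in S1, its S2-half is empty, and
  hat {} = {} rules out an attack on it.\<close>

lemma pre_relevance_primeD:
  assumes "pre_relevance atoms vdash bar hat"
    and "A1 \<inter> A2 = {}"
    and "finite S1" "finite T1" "finite S2" "finite T2"
    and "Atoms atoms S1 \<subseteq> A1" "Atoms atoms T1 \<subseteq> A1"
    and "Atoms atoms S2 \<subseteq> A2" "Atoms atoms T2 \<subseteq> A2"
    and "\<psi> \<in> bar \<phi>" "\<phi> \<in> hat (T1 \<union> T2)" "vdash (S1 \<union> S2) \<psi>"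
  shows "(\<exists>S1'\<subseteq>S1. \<exists>\<phi>1\<in>hat T1. \<exists>\<psi>1\<in>bar \<phi>1. vdash S1' \<psi>1) \<or>
         (\<exists>S2'\<subseteq>S2. \<exists>\<phi>2\<in>hat T2. \<exists>\<psi>2\<in>bar \<phi>2. vdash S2' \<psi>2)"
proof -
  from assms(1) have "\<forall>A1 A2 S1 T1 S2 T2 \<phi> \<psi>. A1 \<inter> A2 = {} \<longrightarrow>
        finite S1 \<longrightarrow> finite T1 \<longrightarrow> finite S2 \<longrightarrow> finite T2 \<longrightarrow>
        Atoms atoms S1 \<subseteq> A1 \<longrightarrow> Atoms atoms T1 \<subseteq> A1 \<longrightarrow>
        Atoms atoms S2 \<subseteq> A2 \<longrightarrow> Atoms atoms T2 \<subseteq> A2 \<longrightarrow>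
        \<psi> \<in> bar \<phi> \<longrightarrow> \<phi> \<in> hat (T1 \<union> T2) \<longrightarrow> vdash (S1 \<union> S2) \<psi> \<longrightarrow>
        (\<exists>S1'\<subseteq>S1. \<exists>\<phi>1\<in>hat T1. \<exists>\<psi>1\<in>bar \<phi>1. vdash S1' \<psi>1) \<or>
        (\<exists>S2'\<subseteq>S2. \<exists>\<phi>2\<in>hat T2. \<exists>\<psi>2\<in>bar \<phi>2. vdash S2' \<psi>2)"
    unfolding pre_relevance_def by (elim conjE)
  from this[rule_format, OF assms(2-)] show ?thesis .
qed

lemma pre_relevance_hat_mono:
  assumes "pre_relevance atoms vdash bar hat" "finite \<Delta>'" "\<Delta> \<subseteq> \<Delta>'"
  shows "hat \<Delta> \<subseteq> hat \<Delta>'"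
proof -
  from assms(1) have "\<forall>\<Delta> \<Delta>'. finite \<Delta> \<longrightarrow> finite \<Delta>' \<longrightarrow> hat \<Delta> \<subseteq> hat (\<Delta> \<union> \<Delta>')"
    unfolding pre_relevance_def by (elim conjE)
  moreover have "finite \<Delta>"
    using assms(2,3) by (rule finite_subset[rotated])
  ultimately have "hat \<Delta> \<subseteq> hat (\<Delta> \<union> \<Delta>')"
    using assms(2) by blast
  then show ?thesis
    using assms(3) by (simp add: sup.absorb2)
qed

lemma Atoms_mono: "X \<subseteq> Y \<Longrightarrow> Atoms atoms X \<subseteq> Atoms atoms Y"
  unfolding Atoms_def by blast

lemma attacks_support_mono:
  assumes "pre_relevance atoms vdash bar hat" "finite \<Delta>'" "\<Delta> \<subseteq> \<Delta>'"
    and "attacks bar hat b (\<Delta>, \<delta>)"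
  shows "attacks bar hat b (\<Delta>', \<delta>')"
  using assms pre_relevance_hat_mono[OF assms(1-3)] unfolding attacks_def by auto

lemma setting_not_attacks_empty:
  assumes "setting vdash bar hat"
  shows "\<not> attacks bar hat b ({}, \<delta>)"
  using assms unfolding setting_def attacks_def by simp

lemma attack_splits_along_indep:
  assumes pre: "pre_relevance atoms vdash bar hat"
    and indep: "indep atoms S1 S2"
    and \<Theta>: "\<Theta> \<subseteq> S1 \<union> S2" "finite \<Theta>" "vdash \<Theta> c"
    and G: "G1 \<subseteq> S1" "G2 \<subseteq> S2" "finite G1" "finite G2"
    and att: "attacks bar hat (\<Theta>, c) (G1 \<union> G2, g)"
  shows "(\<exists>b'\<in>Arg vdash (S1 \<inter> \<Theta>). attacks bar hat b' (G1, g))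
       \<or> (\<exists>b'\<in>Arg vdash (S2 \<inter> \<Theta>). attacks bar hat b' (G2, g))"
proof -
  obtain \<phi> where \<phi>: "\<phi> \<in> hat (G1 \<union> G2)" "c \<in> bar \<phi>"
    using att unfolding attacks_def by auto
  have witness: "(\<Gamma>, \<psi>) \<in> Arg vdash (S \<inter> \<Theta>) \<and> attacks bar hat (\<Gamma>, \<psi>) (G, g)"
    if "\<Gamma> \<subseteq> S \<inter> \<Theta>" "vdash \<Gamma> \<psi>" "\<phi>' \<in> hat G" "\<psi> \<in> bar \<phi>'" for \<Gamma> \<psi> \<phi>' S G
  proof -
    have "finite \<Gamma>"
      using that(1) \<Theta>(2) by (meson finite_subset le_inf_iff)
    then show ?thesis
      using that unfolding Arg_def attacks_def by auto
  qed
  have "(\<exists>\<Gamma>\<subseteq>S1 \<inter> \<Theta>. \<exists>\<phi>1\<in>hat G1. \<exists>\<psi>1\<in>bar \<phi>1. vdash \<Gamma> \<psi>1) \<or>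
        (\<exists>\<Gamma>\<subseteq>\<Theta> - S1. \<exists>\<phi>2\<in>hat G2. \<exists>\<psi>2\<in>bar \<phi>2. vdash \<Gamma> \<psi>2)"
  proof (rule pre_relevance_primeD[OF pre])
    show "Atoms atoms S1 \<inter> Atoms atoms S2 = {}"
      using indep unfolding indep_def .
    show "Atoms atoms (\<Theta> - S1) \<subseteq> Atoms atoms S2"
      using \<Theta>(1) by (intro Atoms_mono) blast
    have "(S1 \<inter> \<Theta>) \<union> (\<Theta> - S1) = \<Theta>" by blast
    with \<Theta>(3) show "vdash ((S1 \<inter> \<Theta>) \<union> (\<Theta> - S1)) c" by simp
  qed (use \<Theta>(2) G \<phi> in \<open>auto simp: Atoms_def\<close>)
  then show ?thesis
  proof (elim disjE exE bexE conjE)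
    fix \<Gamma> \<phi>1 \<psi>1
    assume "\<Gamma> \<subseteq> S1 \<inter> \<Theta>" "\<phi>1 \<in> hat G1" "\<psi>1 \<in> bar \<phi>1" "vdash \<Gamma> \<psi>1"
    then show ?thesis
      using witness by blast
  next
    fix \<Gamma> \<phi>2 \<psi>2
    assume "\<Gamma> \<subseteq> \<Theta> - S1" "\<phi>2 \<in> hat G2" "\<psi>2 \<in> bar \<phi>2" "vdash \<Gamma> \<psi>2"
    moreover have "\<Theta> - S1 \<subseteq> S2 \<inter> \<Theta>"
      using \<Theta>(1) by blast
    ultimately show ?thesis
      using witness[of \<Gamma> S2] by blast
  qed
qed

theorem lemma4:
  fixes atoms :: "'f \<Rightarrow> 'a set"
    and vdash :: "'f set \<Rightarrow> 'f \<Rightarrow> bool"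
    and bar :: "'f \<Rightarrow> 'f set"
    and hat :: "'f set \<Rightarrow> 'f set"
    and S1 S2 \<Theta> :: "'f set"
    and a b :: "'f set \<times> 'f"
  assumes "setting vdash bar hat"
    and "pre_relevance atoms vdash bar hat"
    and "indep atoms S1 S2"
    and "a \<in> Arg vdash (S1 \<union> S2)"
    and "b \<in> Arg vdash (S1 \<union> S2)"
    and "Supp b = \<Theta>"
    and "attacks bar hat b a"
  shows "(\<exists>b' \<in> Arg vdash (S1 \<inter> \<Theta>) \<union> Arg vdash (S2 \<inter> \<Theta>). attacks bar hat b' a)
       \<and> (a \<in> Arg vdash S1 \<longrightarrow> (\<exists>b' \<in> Arg vdash (S1 \<inter> \<Theta>). attacks bar hat b' a))"
proof -
  obtain G g c where a: "a = (G, g)" and b: "b = (\<Theta>, c)"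
    using assms(6) unfolding Supp_def by (cases a, cases b) auto
  have G: "G \<subseteq> S1 \<union> S2" "finite G"
    using assms(4) unfolding a Arg_def by auto
  have \<Theta>: "\<Theta> \<subseteq> S1 \<union> S2" "finite \<Theta>" "vdash \<Theta> c"
    using assms(5) unfolding b Arg_def by auto
  have lift: "attacks bar hat b' (G', g) \<Longrightarrow> G' \<subseteq> G \<Longrightarrow> attacks bar hat b' a" for b' G'
    unfolding a using attacks_support_mono[OF assms(2) G(2)] by blast
  have "G = (G \<inter> S1) \<union> (G - S1)" by blast
  then have "(\<exists>b'\<in>Arg vdash (S1 \<inter> \<Theta>). attacks bar hat b' (G \<inter> S1, g))
           \<or> (\<exists>b'\<in>Arg vdash (S2 \<inter> \<Theta>). attacks bar hat b' (G - S1, g))"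
    using G assms(7) unfolding a b
    by (intro attack_splits_along_indep[OF assms(2,3) \<Theta>]) auto
  then have part1: "\<exists>b' \<in> Arg vdash (S1 \<inter> \<Theta>) \<union> Arg vdash (S2 \<inter> \<Theta>). attacks bar hat b' a"
    using lift by blast
  have part2: "\<exists>b' \<in> Arg vdash (S1 \<inter> \<Theta>). attacks bar hat b' a" if "a \<in> Arg vdash S1"
  proof -
    have "G \<subseteq> S1" using that unfolding a Arg_def by auto
    then show ?thesis
      using attack_splits_along_indep[OF assms(2,3) \<Theta>, of G "{}" g] G(2) assms(7)
        setting_not_attacks_empty[OF assms(1)]
      unfolding a b by auto
  qed
  show ?thesis using part1 part2 by blast
qed

end
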